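(* Let $d$ be an odd integer. Then $U=\{(0,0)\}\cup\{(e,f)\in\mathcal{B}\mid f=d\}$ is maximal avoidable.
   Context: The bicyclic inverse semigroup is $\mathcal{B}=\{(a,b)\in\mathbb{Z}\times\mathbb{Z}\mid a\ge 0,\ a+b\ge 0\}$ with multiplication $(a,b)(c,d)=(\max\{c+d,a\}-d,\ b+d)$. A subset $U\subseteq\mathcal{B}$ is called avoidable if $\mathcal{B}$ can be partitioned into two subsets $A$ and $B$ such that no element of $U$ can be written as a product $xy$ of two distinct elements $x\neq y$ both in $A$, or both in $B$. A maximal avoidable set is an avoidable set not properly contained in any other avoidable subset of $\mathcal{B}$. *)

theory Defs
  imports Main
begin

definition bicyclic :: "(int \<times> int) set" where
  "bicyclic = {(a, b). a \<ge> 0 \<and> a + b \<ge> 0}"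

definition bmult :: "int \<times> int \<Rightarrow> int \<times> int \<Rightarrow> int \<times> int" where
  "bmult x y = (case x of (a, b) \<Rightarrow> case y of (c, d) \<Rightarrow> (max (c + d) a - d, b + d))"

definition avoidable :: "(int \<times> int) set \<Rightarrow> bool" where
  "avoidable U \<longleftrightarrow> U \<subseteq> bicyclic \<and>
     (\<exists>A B. A \<union> B = bicyclic \<and> A \<inter> B = {} \<and>
        (\<forall>x\<in>A. \<forall>y\<in>A. x \<noteq> y \<longrightarrow> bmult x y \<notin> U) \<and>
        (\<forall>x\<in>B. \<forall>y\<in>B. x \<noteq> y \<longrightarrow> bmult x y \<notin> U))"

definition maximal_avoidable :: "(int \<times> int) set \<Rightarrow> bool" where
  "maximal_avoidable U \<longleftrightarrow> avoidable U \<and>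
     (\<forall>V. avoidable V \<and> U \<subseteq> V \<longrightarrow> V = U)"

end

theory Submission
  imports Defs
begin

text \<open>
  If xy \<in> U with x \<noteq> y, then the second coordinates of x and y either sum to d or are -b and b
  with b > 0. Hence any colouring of \<int> that changes under both reflections
  b \<mapsto> d - b and b \<mapsto> -b (b \<noteq> 0), read off the second coordinate, is a partition avoiding U;
  for odd d one is given by residues modulo d. Conversely, a partition avoiding any V \<supseteq> U
  must be such a colouring. The two reflections compose to the translation by d, so the
  colouring is d-periodic off d\<int> and changes exactly once along d\<int>. This is rigid enough
  to factor every (p, q) \<notin> U as a product of two distinct elements of equal colour.
\<close>

definition level_with_identity :: "int \<Rightarrow> (int \<times> int) set" where
  "level_with_identity d = {(0, 0)} \<union> {(e, f). (e, f) \<in> bicyclic \<and> f = d}"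

definition separates_factors :: "(int \<times> int) set \<Rightarrow> (int \<times> int) set \<Rightarrow> bool" where
  "separates_factors A V \<longleftrightarrow>
     (\<forall>x\<in>bicyclic. \<forall>y\<in>bicyclic. x \<noteq> y \<longrightarrow> bmult x y \<in> V \<longrightarrow> (x \<in> A \<longleftrightarrow> y \<notin> A))"

lemma bmult_Pair: "bmult (a, b) (c, e) = (max (c + e) a - e, b + e)"
  by (simp add: bmult_def)

lemma snd_bmult: "snd (bmult x y) = snd x + snd y"
  by (cases x; cases y) (simp add: bmult_def)

lemma bmult_closed: "x \<in> bicyclic \<Longrightarrow> y \<in> bicyclic \<Longrightarrow> bmult x y \<in> bicyclic"
  by (cases x; cases y) (auto simp: bicyclic_def bmult_def max_def)

lemma bmult_zero_right: "x \<in> bicyclic \<Longrightarrow> bmult x (0, 0) = x"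
  by (cases x) (simp add: bicyclic_def bmult_def)

lemma bmult_split:
  assumes "(p, q) \<in> bicyclic" and "p + s \<ge> 0"
  shows "(p + s, q - s) \<in> bicyclic" and "(p, s) \<in> bicyclic"
    and "bmult (p + s, q - s) (p, s) = (p, q)"
  using assms by (auto simp: bicyclic_def bmult_def)

lemma avoidable_iff_separates_factors:
  "avoidable V \<longleftrightarrow> V \<subseteq> bicyclic \<and> (\<exists>A. separates_factors A V)"
proof
  assume "avoidable V"
  then obtain A B where "A \<union> B = bicyclic" "A \<inter> B = {}"
    "\<forall>x\<in>A. \<forall>y\<in>A. x \<noteq> y \<longrightarrow> bmult x y \<notin> V" "\<forall>x\<in>B. \<forall>y\<in>B. x \<noteq> y \<longrightarrow> bmult x y \<notin> V"
    and "V \<subseteq> bicyclic"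
    unfolding avoidable_def by blast
  then have "separates_factors A V"
    unfolding separates_factors_def by blast
  with \<open>V \<subseteq> bicyclic\<close> show "V \<subseteq> bicyclic \<and> (\<exists>A. separates_factors A V)" by blast
next
  assume "V \<subseteq> bicyclic \<and> (\<exists>A. separates_factors A V)"
  then obtain A where "V \<subseteq> bicyclic" "separates_factors A V" by blast
  then show "avoidable V"
    unfolding avoidable_def separates_factors_def
    by (intro conjI exI[of _ "A \<inter> bicyclic"] exI[of _ "bicyclic - A"]) blast+
qed

lemma factors_of_level_with_identity:
  assumes "x \<in> bicyclic" "y \<in> bicyclic" "x \<noteq> y" "bmult x y \<in> level_with_identity d"
  shows "snd x + snd y = d \<or> (0 < snd y \<and> snd x = - snd y)"
proof -
  obtain a b c e where xy: "x = (a, b)" "y = (c, e)" by fastforce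
  show ?thesis
  proof (cases "b + e = d")
    case False
    with assms(4) have "max (c + e) a = e" "b = - e"
      by (auto simp: xy bmult_Pair level_with_identity_def)
    moreover have "a \<ge> 0" "a + b \<ge> 0" "c \<ge> 0" "c + e \<ge> 0"
      using assms(1,2) by (auto simp: xy bicyclic_def)
    ultimately have "c = 0" "a = e" by linarith+
    with assms(3) \<open>c + e \<ge> 0\<close> \<open>b = - e\<close> show ?thesis by (auto simp: xy)
  qed (simp add: xy)
qed

lemma bmult_in_level_with_identity:
  "x \<in> bicyclic \<Longrightarrow> y \<in> bicyclic \<Longrightarrow> snd x + snd y = d \<Longrightarrow> bmult x y \<in> level_with_identity d"
  using bmult_closed[of x y] snd_bmult[of x y]
  by (cases "bmult x y") (auto simp: level_with_identity_def)

definition reflection_colouring :: "int \<Rightarrow> (int \<Rightarrow> bool) \<Rightarrow> bool" where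
  "reflection_colouring d col \<longleftrightarrow>
     (\<forall>b. col (d - b) \<noteq> col b) \<and> (\<forall>b. b \<noteq> 0 \<longrightarrow> col (- b) \<noteq> col b)"

lemma reflection_colouringD:
  assumes "reflection_colouring d col"
  shows "col (d - b) \<noteq> col b" and "b \<noteq> 0 \<Longrightarrow> col (- b) \<noteq> col b"
  using assms by (auto simp: reflection_colouring_def)

lemma reflection_colouring_add:
  assumes "reflection_colouring d col" "b \<noteq> 0"
  shows "col (b + d) = col b"
  using reflection_colouringD[OF assms(1), of "- b"] reflection_colouringD(2)[OF assms]
  by (simp add: add.commute)

lemma reflection_colouring_add_mult:
  assumes col: "reflection_colouring d col" and "\<not> d dvd b"
  shows "col (b + k * d) = col b"
proof (induction k rule: int_induct[where k = 0])
  case (step1 i)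
  have "b + i * d \<noteq> 0"
    using \<open>\<not> d dvd b\<close> by (metis add_eq_0_iff dvd_minus_iff dvd_triv_right)
  with step1 show ?case
    using reflection_colouring_add[OF col, of "b + i * d"] by (simp add: algebra_simps)
next
  case (step2 i)
  have "b + (i - 1) * d \<noteq> 0"
    using \<open>\<not> d dvd b\<close> by (metis add_eq_0_iff dvd_minus_iff dvd_triv_right)
  with step2 show ?case
    using reflection_colouring_add[OF col, of "b + (i - 1) * d"] by (simp add: algebra_simps)
qed simp

lemma reflection_colouring_mult_pos:
  assumes col: "reflection_colouring d col" and "d \<noteq> 0" "k \<ge> 1"
  shows "col (k * d) = col d"
  using \<open>k \<ge> 1\<close>
proof (induction k rule: int_ge_induct)
  case (step i)
  with \<open>d \<noteq> 0\<close> show ?case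
    using reflection_colouring_add[OF col, of "i * d"] by (simp add: algebra_simps)
qed simp

lemma reflection_colouring_mult_nonpos:
  assumes col: "reflection_colouring d col" and "d \<noteq> 0" "k \<le> 0"
  shows "col (k * d) = col 0"
  using \<open>k \<le> 0\<close>
proof (induction k rule: int_le_induct)
  case (step i)
  with \<open>d \<noteq> 0\<close> show ?case
    using reflection_colouring_add[OF col, of "(i - 1) * d"] by (simp add: algebra_simps)
qed simp

text \<open>Off d\<int> the colour compares the residue modulo \<bar>d\<bar> with \<bar>d\<bar>/2, which separates r from
  \<bar>d\<bar> - r because d is odd; on d\<int> it separates the positive multiples of d from the others.\<close>

definition residue_colouring :: "int \<Rightarrow> int \<Rightarrow> bool" where
  "residue_colouring d b = (if d dvd b then 0 < b div d else 2 * (b mod \<bar>d\<bar>) < \<bar>d\<bar>)"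

lemma residue_colouring_opposite_residues:
  assumes "odd d" "\<not> d dvd b" "\<bar>d\<bar> dvd b' + b"
  shows "residue_colouring d b' \<noteq> residue_colouring d b"
proof -
  define m where "m = \<bar>d\<bar>"
  have "\<not> m dvd b" "\<not> m dvd b'" "odd m"
    using assms dvd_add_right_iff[of d b' b] by (auto simp: m_def)
  have "b' mod m = (- b) mod m"
    using assms(3) by (simp add: m_def mod_eq_dvd_iff)
  also have "\<dots> = m - b mod m"
    using \<open>\<not> m dvd b\<close> by (simp add: zmod_zminus1_eq_if mod_eq_0_iff_dvd)
  finally have "b' mod m = m - b mod m" .
  moreover have "2 * (b mod m) \<noteq> m"
    using \<open>odd m\<close> by (metis dvd_triv_left)
  ultimately show ?thesis
    using assms(2) \<open>\<not> m dvd b'\<close> by (auto simp: residue_colouring_def m_def)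
qed

lemma residue_colouring_mult: "d \<noteq> 0 \<Longrightarrow> residue_colouring d (d * k) \<longleftrightarrow> 0 < k"
  by (simp add: residue_colouring_def)

lemma reflection_colouring_residue_colouring:
  assumes "odd d"
  shows "reflection_colouring d (residue_colouring d)"
  unfolding reflection_colouring_def
proof (intro conjI allI impI)
  have "d \<noteq> 0" using assms by auto
  fix b
  show "residue_colouring d (d - b) \<noteq> residue_colouring d b"
  proof (cases "d dvd b")
    case True
    then obtain k where "b = d * k" "d - b = d * (1 - k)"
      by (metis dvd_def mult.right_neutral right_diff_distrib)
    then show ?thesis
      by (simp only: residue_colouring_mult[OF \<open>d \<noteq> 0\<close>]) linarith
  qed (use assms residue_colouring_opposite_residues in auto)
  show "residue_colouring d (- b) \<noteq> residue_colouring d b" if "b \<noteq> 0"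
  proof (cases "d dvd b")
    case True
    then obtain k where "b = d * k" "- b = d * - k" by auto
    with \<open>b \<noteq> 0\<close> show ?thesis
      by (simp only: residue_colouring_mult[OF \<open>d \<noteq> 0\<close>]) auto
  qed (use assms residue_colouring_opposite_residues in auto)
qed

lemma reflection_colouring_separates_factors:
  assumes col: "reflection_colouring d col"
  shows "separates_factors {x. col (snd x)} (level_with_identity d)"
  unfolding separates_factors_def
proof (intro ballI impI)
  fix x y
  assume "x \<in> bicyclic" "y \<in> bicyclic" "x \<noteq> y" "bmult x y \<in> level_with_identity d"
  then have "snd x = d - snd y \<or> (snd y \<noteq> 0 \<and> snd x = - snd y)"
    using factors_of_level_with_identity by fastforce
  then show "x \<in> {x. col (snd x)} \<longleftrightarrow> y \<notin> {x. col (snd x)}"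
    using reflection_colouringD[OF col] by auto
qed

lemma avoidable_level_with_identity:
  assumes "odd d"
  shows "avoidable (level_with_identity d)"
proof -
  have "level_with_identity d \<subseteq> bicyclic"
    by (auto simp: level_with_identity_def bicyclic_def)
  then show ?thesis
    using reflection_colouring_separates_factors[OF reflection_colouring_residue_colouring[OF assms]]
    by (auto simp: avoidable_iff_separates_factors)
qed

lemma separates_factors_reflection_colouring:
  assumes "odd d" "level_with_identity d \<subseteq> V" "separates_factors A V"
  obtains col where "reflection_colouring d col" and "\<And>x. x \<in> bicyclic \<Longrightarrow> x \<in> A \<longleftrightarrow> col (snd x)"
proof -
  define rep :: "int \<Rightarrow> int \<times> int" where "rep b = (max 0 (- b), b)" for b
  have rep: "rep b \<in> bicyclic" "snd (rep b) = b" for b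
    by (auto simp: rep_def bicyclic_def)
  define col where "col b \<longleftrightarrow> rep b \<in> A" for b
  have sep: "x \<in> A \<longleftrightarrow> y \<notin> A"
    if "x \<in> bicyclic" "y \<in> bicyclic" "x \<noteq> y" "bmult x y \<in> level_with_identity d" for x y
    using assms(2,3) that unfolding separates_factors_def by blast
  txt \<open>Both x and rep (snd x) are separated from rep (d - snd x), so membership in A depends
    only on the second coordinate.\<close>
  have opposite_level: "x \<in> A \<longleftrightarrow> rep (d - snd x) \<notin> A" if "x \<in> bicyclic" for x
  proof -
    have "x \<noteq> rep (d - snd x)"
      using \<open>odd d\<close> rep(2)[of "d - snd x"] by (metis dvd_triv_left mult_2 diff_eq_eq)
    moreover have "bmult x (rep (d - snd x)) \<in> level_with_identity d"
      using bmult_in_level_with_identity[OF that rep(1), of "d - snd x"] rep(2) by simp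
    ultimately show ?thesis
      using sep[OF that rep(1)] by blast
  qed
  have in_A: "x \<in> A \<longleftrightarrow> col (snd x)" if "x \<in> bicyclic" for x
    using opposite_level[OF that] opposite_level[OF rep(1), of "snd x", unfolded rep(2)]
    unfolding col_def by blast
  have col_neg_pos: "col (- b) \<noteq> col b" if "b > 0" for b
  proof -
    have "bmult (rep (- b)) (rep b) = (0, 0)" "rep (- b) \<noteq> rep b"
      using that by (auto simp: rep_def bmult_def)
    then show ?thesis
      using sep[OF rep(1) rep(1)] by (simp add: col_def level_with_identity_def)
  qed
  have "col (- b) \<noteq> col b" if "b \<noteq> 0" for b
  proof (cases "b > 0")
    case False
    with that have "- b > 0" by simp
    from col_neg_pos[OF this] show ?thesis by simp
  qed (rule col_neg_pos)
  moreover have "col (d - b) \<noteq> col b" for b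
    using opposite_level[OF rep(1), of b, unfolded rep(2)] unfolding col_def by blast
  ultimately have "reflection_colouring d col"
    by (simp add: reflection_colouring_def)
  then show thesis using in_A by (rule that)
qed

definition monochromatic_product :: "(int \<Rightarrow> bool) \<Rightarrow> int \<times> int \<Rightarrow> bool" where
  "monochromatic_product col z \<longleftrightarrow>
     (\<exists>x\<in>bicyclic. \<exists>y\<in>bicyclic. x \<noteq> y \<and> bmult x y = z \<and> col (snd x) = col (snd y))"

lemma monochromatic_product_identity:
  assumes "z \<in> bicyclic" "z \<noteq> (0, 0)" "col (snd z) = col 0"
  shows "monochromatic_product col z"
  unfolding monochromatic_product_def
  using assms bmult_zero_right[OF assms(1)] by (intro bexI[of _ z] bexI[of _ "(0, 0)"]) (auto simp: bicyclic_def)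

lemma monochromatic_product_split:
  assumes "(p, q) \<in> bicyclic" "p + s \<ge> 0" "s \<noteq> 0" "col (q - s) = col s"
  shows "monochromatic_product col (p, q)"
  unfolding monochromatic_product_def
  using bmult_split[OF assms(1,2)] assms(3,4)
  by (intro bexI[of _ "(p + s, q - s)"] bexI[of _ "(p, s)"]) auto

lemma monochromatic_product_mult:
  assumes col: "reflection_colouring d col" and "d \<noteq> 0"
    and pq: "(p, q) \<in> bicyclic" "(p, q) \<noteq> (0, 0)" and "q = k * d" "k \<noteq> 1"
  shows "monochromatic_product col (p, q)"
proof (cases "k \<le> 0")
  case True
  then show ?thesis
    using pq reflection_colouring_mult_nonpos[OF col \<open>d \<noteq> 0\<close> True] \<open>q = k * d\<close>
    by (intro monochromatic_product_identity) auto
next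
  case False
  with \<open>k \<noteq> 1\<close> have "k - 1 \<ge> 1" by simp
  have "p + d \<ge> 0"
  proof (cases "d > 0")
    case False
    then have "(k - 1) * d \<le> 0"
      using \<open>k - 1 \<ge> 1\<close> by (simp add: mult_nonneg_nonpos)
    with pq(1) \<open>q = k * d\<close> show ?thesis by (simp add: bicyclic_def algebra_simps)
  qed (use pq(1) in \<open>simp add: bicyclic_def\<close>)
  moreover have "col (q - d) = col d"
    using reflection_colouring_mult_pos[OF col \<open>d \<noteq> 0\<close> \<open>k - 1 \<ge> 1\<close>] \<open>q = k * d\<close>
    by (simp add: algebra_simps)
  ultimately show ?thesis
    using monochromatic_product_split[OF pq(1)] \<open>d \<noteq> 0\<close> by blast
qed

lemma odd_exists_pos_half_mod:
  fixes d q :: int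
  assumes "odd d"
  shows "\<exists>s > 0. d dvd q - 2 * s"
proof -
  obtain j where d: "d = 2 * j + 1"
    using assms by (blast elim: oddE)
  define M where "M = \<bar>q * (j + 1)\<bar> + 1"
  define s where "s = q * (j + 1) + d * d * M"
  have "d \<noteq> 0" using assms by auto
  then have "0 < d * d"
    by (auto simp: zero_less_mult_iff linorder_neq_iff)
  then have "1 \<le> d * d"
    by linarith
  then have "M \<le> d * d * M"
    using mult_right_mono[of 1 "d * d" M] by (simp add: M_def)
  moreover have "q * (j + 1) + M > 0"
    using abs_ge_minus_self[of "q * (j + 1)"] unfolding M_def by linarith
  ultimately have "s > 0"
    unfolding s_def by linarith
  moreover have "q - 2 * s = d * (- q - 2 * d * M)"
    unfolding s_def d by (simp add: algebra_simps)
  ultimately show ?thesis by (metis dvd_triv_left)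
qed

lemma monochromatic_product_not_dvd:
  assumes "odd d" and col: "reflection_colouring d col"
    and pq: "(p, q) \<in> bicyclic" and "\<not> d dvd q"
  shows "monochromatic_product col (p, q)"
proof -
  txt \<open>Choosing s \<equiv> q/2 modulo d puts s and q - s in the same residue class off d\<int>.\<close>
  obtain s k where "s > 0" "q - 2 * s = d * k"
    using odd_exists_pos_half_mod[OF \<open>odd d\<close>] by blast
  then have q: "q = 2 * s + d * k" by linarith
  have "\<not> d dvd s"
  proof
    assume "d dvd s"
    then have "d dvd 2 * s + d * k" by simp
    with \<open>\<not> d dvd q\<close> q show False by simp
  qed
  then have "col (s + k * d) = col s"
    by (rule reflection_colouring_add_mult[OF col])
  moreover have "q - s = s + k * d"
    using q by (simp add: mult.commute)
  moreover have "p + s \<ge> 0"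
    using pq \<open>s > 0\<close> by (simp add: bicyclic_def)
  ultimately show ?thesis
    using monochromatic_product_split[OF pq] \<open>s > 0\<close> by simp
qed

lemma monochromatic_product_outside_level:
  assumes "odd d" "reflection_colouring d col" "z \<in> bicyclic" "z \<notin> level_with_identity d"
  shows "monochromatic_product col z"
proof -
  obtain p q where z: "z = (p, q)" by fastforce
  with assms(3,4) have "q \<noteq> d" "z \<noteq> (0, 0)"
    by (auto simp: level_with_identity_def)
  show ?thesis
  proof (cases "d dvd q")
    case True
    then obtain k where "q = k * d" by (metis dvd_def mult.commute)
    with \<open>q \<noteq> d\<close> have "k \<noteq> 1" by auto
    with assms \<open>z \<noteq> (0, 0)\<close> \<open>q = k * d\<close> show ?thesis
      unfolding z by (intro monochromatic_product_mult) auto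
  qed (use assms monochromatic_product_not_dvd in \<open>auto simp: z\<close>)
qed

lemma separates_factors_not_monochromatic:
  assumes "separates_factors A V" "\<And>x. x \<in> bicyclic \<Longrightarrow> x \<in> A \<longleftrightarrow> col (snd x)" "z \<in> V"
  shows "\<not> monochromatic_product col z"
  using assms unfolding separates_factors_def monochromatic_product_def by blast

theorem proposition6p3:
  fixes d :: int
  assumes "odd d"
  shows "maximal_avoidable ({(0, 0)} \<union> {(e, f). (e, f) \<in> bicyclic \<and> f = d})"
proof -
  have "V \<subseteq> level_with_identity d" if V: "avoidable V" "level_with_identity d \<subseteq> V" for V
  proof
    fix z assume "z \<in> V"
    obtain A where "V \<subseteq> bicyclic" and A: "separates_factors A V"
      using V(1) by (auto simp: avoidable_iff_separates_factors)
    obtain col where col: "reflection_colouring d col" "\<And>x. x \<in> bicyclic \<Longrightarrow> x \<in> A \<longleftrightarrow> col (snd x)"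
      using separates_factors_reflection_colouring[OF assms V(2) A] by blast
    show "z \<in> level_with_identity d"
      using monochromatic_product_outside_level[OF assms col(1)]
        separates_factors_not_monochromatic[OF A col(2) \<open>z \<in> V\<close>] \<open>z \<in> V\<close> \<open>V \<subseteq> bicyclic\<close>
      by blast
  qed
  with avoidable_level_with_identity[OF assms] show ?thesis
    unfolding maximal_avoidable_def level_with_identity_def by blast
qed

end
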